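(* Let $X$ be a Hausdorff complex topological vector space with $\dim X>1$, and let $\Gamma$ be an SOT-dense subset of $\mathcal{B}(X)$. Then there exists $\Gamma_1\subset\Gamma$ such that $\Gamma_1$ is SOT-dense in $\mathcal{B}(X)$ and $\Gamma_1$ is not strictly transitive.
   Context: $\mathcal{B}(X)$ denotes the space of continuous linear operators on $X$. A set $\Gamma\subset\mathcal{B}(X)$ is strictly transitive if for each pair of nonzero $x,y\in X$ there exist $\alpha\in\mathbb{C}$ and $T\in\Gamma$ with $\alpha Tx=y$. The strong operator topology (SOT) on $\mathcal{B}(X)$ is the topology in which $T$ has a neighborhood basis of sets $\{S\in\mathcal{B}(X): Se_i-Te_i\in U,\ i=1,\dots,k\}$, where $k\in\mathbb{N}$, $e_1,\dots,e_k\in X$ are linearly independent, and $U$ is a neighborhood of $0$ in $X$. *)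

theory Defs
  imports "HOL-Analysis.Analysis"
begin

definition complex_tvs :: "(complex \<Rightarrow> 'v::ab_group_add \<Rightarrow> 'v) \<Rightarrow> 'v topology \<Rightarrow> bool" where
  "complex_tvs smul T \<longleftrightarrow>
     vector_space smul \<and> topspace T = UNIV \<and>
     continuous_map (prod_topology T T) T (\<lambda>(x, y). x + y) \<and>
     continuous_map (prod_topology (euclidean :: complex topology) T) T (\<lambda>(c, x). smul c x)"

text \<open>dim X > 1: there are two distinct linearly independent vectors
(works also for infinite dimension).\<close>
definition dim_gt_one :: "(complex \<Rightarrow> 'v::ab_group_add \<Rightarrow> 'v) \<Rightarrow> bool" where
  "dim_gt_one smul \<longleftrightarrow> (\<exists>x y. x \<noteq> y \<and> \<not> module.dependent smul {x, y})"

definition bounded_ops :: "(complex \<Rightarrow> 'v::ab_group_add \<Rightarrow> 'v) \<Rightarrow> 'v topology \<Rightarrow> ('v \<Rightarrow> 'v) set" where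
  "bounded_ops smul T = {A. Vector_Spaces.linear smul smul A \<and> continuous_map T T A}"

definition sot_nbhd :: "(complex \<Rightarrow> 'v::ab_group_add \<Rightarrow> 'v) \<Rightarrow> 'v topology \<Rightarrow> ('v \<Rightarrow> 'v) \<Rightarrow> 'v set \<Rightarrow> 'v set \<Rightarrow> ('v \<Rightarrow> 'v) set" where
  "sot_nbhd smul T A E U = {S \<in> bounded_ops smul T. \<forall>e\<in>E. S e - A e \<in> U}"

definition sot_dense :: "(complex \<Rightarrow> 'v::ab_group_add \<Rightarrow> 'v) \<Rightarrow> 'v topology \<Rightarrow> ('v \<Rightarrow> 'v) set \<Rightarrow> bool" where
  "sot_dense smul T \<Gamma> \<longleftrightarrow> \<Gamma> \<subseteq> bounded_ops smul T \<and>
     (\<forall>A\<in>bounded_ops smul T. \<forall>E U. finite E \<and> \<not> module.dependent smul E \<and>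
        (\<exists>V. openin T V \<and> 0 \<in> V \<and> V \<subseteq> U) \<longrightarrow> sot_nbhd smul T A E U \<inter> \<Gamma> \<noteq> {})"

definition strictly_transitive :: "(complex \<Rightarrow> 'v::ab_group_add \<Rightarrow> 'v) \<Rightarrow> ('v \<Rightarrow> 'v) set \<Rightarrow> bool" where
  "strictly_transitive smul \<Gamma> \<longleftrightarrow>
     (\<forall>x y. x \<noteq> 0 \<and> y \<noteq> 0 \<longrightarrow> (\<exists>\<alpha> A. A \<in> \<Gamma> \<and> smul \<alpha> (A x) = y))"

end

theory Submission imports Defs begin

text \<open>Fix independent vectors \<open>x\<close>, \<open>y\<close> and keep only those operators of \<open>\<Gamma>\<close> that do not
  map \<open>x\<close> into the line \<open>span {y}\<close>; such a family can never send \<open>x\<close> to a multiple of \<open>y\<close>.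
  It is still SOT-dense: a given operator \<open>A\<close> can be replaced by \<open>A + \<epsilon> id\<close> so that \<open>A x\<close>
  leaves the line, lines are closed in a Hausdorff TVS, and density of \<open>\<Gamma>\<close> yields an operator
  close to \<open>A\<close> both on the prescribed finite independent set and at \<open>x\<close>.\<close>

locale complex_tvs_space =
  fixes smul :: "complex \<Rightarrow> 'v::ab_group_add \<Rightarrow> 'v" and T :: "'v topology"
  assumes complex_tvs: "complex_tvs smul T"
begin

sublocale vector_space smul
  using complex_tvs unfolding complex_tvs_def by blast

lemma topspace_eq [simp]: "topspace T = UNIV"
  using complex_tvs unfolding complex_tvs_def by blast

lemma continuous_map_add_pair: "continuous_map (prod_topology T T) T (\<lambda>(x, y). x + y)"
  using complex_tvs unfolding complex_tvs_def by blast

lemma continuous_map_scale_pair: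
  "continuous_map (prod_topology (euclidean :: complex topology) T) T (\<lambda>(c, x). smul c x)"
  using complex_tvs unfolding complex_tvs_def by blast

lemma continuous_map_add:
  assumes "continuous_map T T f" "continuous_map T T g"
  shows "continuous_map T T (\<lambda>v. f v + g v)"
  using continuous_map_compose[OF continuous_map_pairedI[OF assms] continuous_map_add_pair]
  by (simp add: o_def)

lemma continuous_map_scale_left: "continuous_map euclidean T (\<lambda>c. smul c y)"
proof -
  have "continuous_map euclidean (prod_topology euclidean T) (\<lambda>c::complex. (c, y))"
    by (intro continuous_map_pairedI continuous_map_id) auto
  from continuous_map_compose[OF this continuous_map_scale_pair] show ?thesis
    by (simp add: o_def)
qed

lemma continuous_map_scale_right: "continuous_map T T (smul c)"
proof -
  have "continuous_map T (prod_topology euclidean T) (\<lambda>v. (c, v))"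
    by (intro continuous_map_pairedI continuous_map_id) auto
  from continuous_map_compose[OF this continuous_map_scale_pair] show ?thesis
    by (simp add: o_def)
qed

lemma openin_translation_preimage:
  assumes "openin T N"
  shows "openin T {w. a + w \<in> N}"
proof -
  have "continuous_map T T (\<lambda>w. a + w)"
    using continuous_map_add[OF continuous_map_const[THEN iffD2] continuous_map_id[unfolded id_def]]
    by simp
  from openin_continuous_map_preimage[OF this assms] show ?thesis by simp
qed

lemma zero_nbhd_add:
  assumes "openin T W0" "0 \<in> W0"
  obtains W where "openin T W" "0 \<in> W" "\<And>a b. a \<in> W \<Longrightarrow> b \<in> W \<Longrightarrow> a + b \<in> W0"
proof -
  have "openin (prod_topology T T) {p. (\<lambda>(x, y). x + y) p \<in> W0}"
    using openin_continuous_map_preimage[OF continuous_map_add_pair assms(1)] by simp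
  from openin_prod_topology_alt[THEN iffD1, OF this, rule_format, of 0 0] assms(2)
  obtain U V where "openin T U" "openin T V" "0 \<in> U" "0 \<in> V"
      "U \<times> V \<subseteq> {p. (\<lambda>(x, y). x + y) p \<in> W0}"
    by auto
  then show thesis
    by (intro that[of "U \<inter> V"]) auto
qed

lemma zero_nbhd_linear_combination:
  assumes "finite F" "openin T W0" "0 \<in> W0"
  shows "\<exists>W. openin T W \<and> 0 \<in> W \<and>
    (\<forall>w. (\<forall>e\<in>F. w e \<in> W) \<longrightarrow> (\<Sum>e\<in>F. smul (u e) (w e)) \<in> W0)"
  using assms
proof (induction F arbitrary: W0 rule: finite_induct)
  case empty
  then show ?case
    using openin_topspace[of T] by (intro exI[of _ UNIV]) simp
next
  case (insert e F)
  obtain W where W: "openin T W" "0 \<in> W" "\<And>a b. a \<in> W \<Longrightarrow> b \<in> W \<Longrightarrow> a + b \<in> W0"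
    using zero_nbhd_add[OF insert.prems] by blast
  let ?N = "{v. smul (u e) v \<in> W}"
  have N: "openin T ?N" "0 \<in> ?N"
    using openin_continuous_map_preimage[OF continuous_map_scale_right W(1)] W(2) by simp_all
  obtain W' where W': "openin T W'" "0 \<in> W'"
    "\<forall>w. (\<forall>e\<in>F. w e \<in> W') \<longrightarrow> (\<Sum>e\<in>F. smul (u e) (w e)) \<in> W"
    using insert.IH[OF W(1,2)] by blast
  show ?case
  proof (intro exI[of _ "?N \<inter> W'"] conjI allI impI)
    fix w
    assume "\<forall>e'\<in>insert e F. w e' \<in> ?N \<inter> W'"
    then show "(\<Sum>e'\<in>insert e F. smul (u e') (w e')) \<in> W0"
      using W(3) W'(3) insert.hyps by simp
  qed (use N W' in auto)
qed

lemma exists_nonzero_scale_into_nbhd: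
  assumes "finite E" "openin T V" "0 \<in> V"
  obtains \<epsilon> where "\<epsilon> \<noteq> 0" "\<And>e. e \<in> E \<Longrightarrow> smul \<epsilon> e \<in> V"
proof -
  have "openin euclidean {c \<in> topspace euclidean. smul c e \<in> V}" for e
    by (rule openin_continuous_map_preimage[OF continuous_map_scale_left assms(2)])
  then have "open {c. smul c e \<in> V}" for e
    by (simp flip: open_openin)
  then have "open (\<Inter>e\<in>E. {c. smul c e \<in> V})"
    using assms(1) by (intro open_INT) auto
  moreover have "0 \<in> (\<Inter>e\<in>E. {c. smul c e \<in> V})"
    using assms(3) by simp
  ultimately obtain r where r: "r > 0" "ball 0 r \<subseteq> (\<Inter>e\<in>E. {c. smul c e \<in> V})"
    by (meson open_contains_ball)
  then have "complex_of_real (r / 2) \<in> (\<Inter>e\<in>E. {c. smul c e \<in> V})"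
    by (simp add: subset_eq dist_norm)
  with r(1) show thesis
    by (intro that[of "complex_of_real (r / 2)"]) auto
qed

text \<open>Scaling back by \<open>inverse c\<close> is continuous at \<open>(0, z)\<close>, so a large multiple of \<open>y\<close>
  near \<open>z\<close> would put \<open>y\<close> into any prescribed neighbourhood of \<open>0\<close>.\<close>
lemma bounded_scalars_near_point:
  assumes "Hausdorff_space T" "y \<noteq> 0"
  obtains N r where "openin T N" "z \<in> N" "\<And>c. smul c y \<in> N \<Longrightarrow> norm c \<le> r"
proof -
  obtain W Y where W: "openin T W" "openin T Y" "0 \<in> W" "y \<in> Y" "disjnt W Y"
    using assms unfolding Hausdorff_space_def by (metis topspace_eq UNIV_I)
  have "openin (prod_topology euclidean T) {p. (\<lambda>(c, x). smul c x) p \<in> W}"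
    using openin_continuous_map_preimage[OF continuous_map_scale_pair W(1)] by simp
  from openin_prod_topology_alt[THEN iffD1, OF this, rule_format, of 0 z] W(3)
  obtain B N where BN: "openin euclidean B" "openin T N" "0 \<in> B" "z \<in> N"
      "B \<times> N \<subseteq> {p. (\<lambda>(c, x). smul c x) p \<in> W}"
    by auto
  obtain d where d: "d > 0" "ball 0 d \<subseteq> B"
    using BN(1,3) open_contains_ball by (metis open_openin)
  have "norm c \<le> 1 / d" if "smul c y \<in> N" for c
  proof (rule ccontr)
    assume "\<not> norm c \<le> 1 / d"
    then have c: "1 / d < norm c"
      by simp
    then have "c \<noteq> 0"
      using d(1) by (auto simp: less_le_trans[of 0 "1 / d"])
    have "norm (inverse c) = inverse (norm c)"
      by (simp add: norm_inverse)
    also have "\<dots> < inverse (1 / d)"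
      using c d(1) by (intro less_imp_inverse_less) auto
    finally have "norm (inverse c) < d"
      by simp
    then have "(inverse c, smul c y) \<in> B \<times> N"
      using that d(2) by (auto simp: dist_norm)
    then have "(inverse c, smul c y) \<in> {p. (\<lambda>(c, x). smul c x) p \<in> W}"
      by (rule subsetD[OF BN(5)])
    then have "y \<in> W"
      using \<open>c \<noteq> 0\<close> by simp
    with W show False
      by (auto simp: disjnt_def)
  qed
  then show thesis
    using that BN(2,4) by blast
qed

lemma closedin_span_singleton:
  assumes "Hausdorff_space T"
  shows "closedin T (span {y})"
proof (cases "y = 0")
  case True
  then show ?thesis
    using closedin_Hausdorff_singleton[OF assms] by simp
next
  case False
  have "\<exists>N. openin T N \<and> z \<in> N \<and> N \<subseteq> - span {y}" if z: "z \<notin> span {y}" for z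
  proof -
    obtain N r where N: "openin T N" "z \<in> N" "\<And>c. smul c y \<in> N \<Longrightarrow> norm c \<le> r"
      using bounded_scalars_near_point[OF assms False] by blast
    have "compactin T {z}"
      by simp
    moreover have "compactin T ((\<lambda>c. smul c y) ` cball 0 r)"
      by (rule image_compactin[OF _ continuous_map_scale_left]) simp
    moreover have "disjnt {z} ((\<lambda>c. smul c y) ` cball 0 r)"
      using z by (auto simp: span_singleton disjnt_def)
    ultimately obtain U K where UK: "openin T U" "openin T K" "{z} \<subseteq> U"
        "(\<lambda>c. smul c y) ` cball 0 r \<subseteq> K" "disjnt U K"
      by (rule Hausdorff_space_compact_separation[OF assms])
    have "v \<notin> span {y}" if "v \<in> N \<inter> U" for v
    proof
      assume "v \<in> span {y}"
      then obtain c where c: "v = smul c y"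
        by (auto simp: span_singleton)
      then have "c \<in> cball 0 r"
        using that N(3) by simp
      then have "v \<in> K"
        using UK(4) c by blast
      with that UK(5) show False
        by (auto simp: disjnt_def)
    qed
    then show ?thesis
      using N UK by (intro exI[of _ "N \<inter> U"]) auto
  qed
  then have "openin T (- span {y})"
    using openin_subopen by blast
  then show ?thesis
    by (simp add: closedin_def Compl_eq_Diff_UNIV)
qed

lemma bounded_ops_add_scale_id:
  assumes "A \<in> bounded_ops smul T"
  shows "(\<lambda>v. A v + smul \<epsilon> v) \<in> bounded_ops smul T"
proof -
  have lin: "Vector_Spaces.linear smul smul A" and cont: "continuous_map T T A"
    using assms unfolding bounded_ops_def by auto
  have "Vector_Spaces.linear smul smul (\<lambda>v. A v + smul \<epsilon> v)"
    using lin unfolding Vector_Spaces.linear_iff by (auto simp: algebra_simps scale_left_commute)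
  moreover have "continuous_map T T (\<lambda>v. A v + smul \<epsilon> v)"
    by (rule continuous_map_add[OF cont continuous_map_scale_right])
  ultimately show ?thesis
    unfolding bounded_ops_def by blast
qed

text \<open>If \<open>A x \<in> L\<close>, the perturbation \<open>A + \<epsilon> id\<close> moves \<open>x\<close> off \<open>L\<close> because \<open>x \<notin> L\<close>.\<close>
lemma bounded_ops_perturb_off_subspace:
  assumes "A \<in> bounded_ops smul T" "subspace L" "x \<notin> L"
    and "finite E" "openin T V" "0 \<in> V"
  obtains A' where "A' \<in> bounded_ops smul T" "A' x \<notin> L" "\<And>e. e \<in> E \<Longrightarrow> A' e - A e \<in> V"
proof (cases "A x \<in> L")
  case False
  then show thesis
    using that[of A] assms by auto
next
  case True
  obtain \<epsilon> where \<epsilon>: "\<epsilon> \<noteq> 0" "\<And>e. e \<in> E \<Longrightarrow> smul \<epsilon> e \<in> V"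
    using exists_nonzero_scale_into_nbhd[OF assms(4-6)] by blast
  have "A x + smul \<epsilon> x \<notin> L"
  proof
    assume "A x + smul \<epsilon> x \<in> L"
    then have "smul \<epsilon> x \<in> L"
      using True assms(2) by (metis add_diff_cancel_left' subspace_diff)
    then have "smul (inverse \<epsilon>) (smul \<epsilon> x) \<in> L"
      by (rule subspace_scale[OF assms(2)])
    with \<epsilon>(1) assms(3) show False
      by simp
  qed
  then show thesis
    using that[of "\<lambda>v. A v + smul \<epsilon> v"] bounded_ops_add_scale_id[OF assms(1)] \<epsilon>(2) by simp
qed

lemma sot_dense_obtain:
  assumes "sot_dense smul T \<Gamma>" "A \<in> bounded_ops smul T" "finite E" "independent E"
    and "openin T V" "0 \<in> V"
  obtains S where "S \<in> \<Gamma>" "S \<in> bounded_ops smul T" "\<And>e. e \<in> E \<Longrightarrow> S e - A e \<in> V"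
proof -
  have "sot_nbhd smul T A E V \<inter> \<Gamma> \<noteq> {}"
    using assms unfolding sot_dense_def by blast
  then show thesis
    using that unfolding sot_nbhd_def by blast
qed

text \<open>If \<open>x\<close> lies in the span of \<open>E\<close>, closeness at \<open>x\<close> follows by linearity from
  closeness on \<open>E\<close>; otherwise \<open>insert x E\<close> is still independent.\<close>
lemma sot_dense_approx_at_point:
  assumes dense: "sot_dense smul T \<Gamma>" and A: "A \<in> bounded_ops smul T"
    and E: "finite E" "independent E"
    and V: "openin T V" "0 \<in> V" and W: "openin T W" "0 \<in> W"
  obtains S where "S \<in> \<Gamma>" "\<And>e. e \<in> E \<Longrightarrow> S e - A e \<in> V" "S x - A x \<in> W"
proof (cases "x \<in> span E")
  case True
  then obtain u where u: "x = (\<Sum>e\<in>E. smul (u e) e)"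
    using span_finite[OF E(1)] by auto
  obtain W' where W': "openin T W'" "0 \<in> W'"
    "\<forall>w. (\<forall>e\<in>E. w e \<in> W') \<longrightarrow> (\<Sum>e\<in>E. smul (u e) (w e)) \<in> W"
    using zero_nbhd_linear_combination[OF E(1) W] by blast
  obtain S where S: "S \<in> \<Gamma>" "S \<in> bounded_ops smul T" "\<And>e. e \<in> E \<Longrightarrow> S e - A e \<in> V \<inter> W'"
    using sot_dense_obtain[OF dense A E openin_Int[OF V(1) W'(1)]] V(2) W'(2) by blast
  have "module_hom smul smul S" "module_hom smul smul A"
    using S(2) A unfolding bounded_ops_def module_hom_iff_linear by auto
  then have "S x - A x = (\<Sum>e\<in>E. smul (u e) (S e - A e))"
    unfolding u by (simp add: module_hom.sum module_hom.scale sum_subtractf scale_right_diff_distrib)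
  also have "\<dots> \<in> W"
    using W'(3) S(3) by auto
  finally show thesis
    using that S by auto
next
  case False
  then have "independent (insert x E)"
    using E(2) independent_insertI by blast
  then obtain S where "S \<in> \<Gamma>" "\<And>e. e \<in> insert x E \<Longrightarrow> S e - A e \<in> V \<inter> W"
    using sot_dense_obtain[OF dense A finite.insertI[OF E(1)] _ openin_Int[OF V(1) W(1)]] V(2) W(2)
    by blast
  then show thesis
    using that by blast
qed

lemma sot_dense_avoiding_closed_subspace:
  assumes dense: "sot_dense smul T \<Gamma>"
    and L: "subspace L" "closedin T L" and x: "x \<notin> L"
  shows "sot_dense smul T {A \<in> \<Gamma>. A x \<notin> L}"
  unfolding sot_dense_def
proof (intro conjI ballI allI impI)
  show "{A \<in> \<Gamma>. A x \<notin> L} \<subseteq> bounded_ops smul T"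
    using dense unfolding sot_dense_def by blast
next
  fix A E U
  assume A: "A \<in> bounded_ops smul T"
    and "finite E \<and> independent E \<and> (\<exists>V. openin T V \<and> 0 \<in> V \<and> V \<subseteq> U)"
  then obtain V where E: "finite E" "independent E" and V: "openin T V" "0 \<in> V" "V \<subseteq> U"
    by blast
  obtain V' where V': "openin T V'" "0 \<in> V'" "\<And>a b. a \<in> V' \<Longrightarrow> b \<in> V' \<Longrightarrow> a + b \<in> V"
    using zero_nbhd_add[OF V(1,2)] by blast
  obtain A' where A': "A' \<in> bounded_ops smul T" "A' x \<notin> L" "\<And>e. e \<in> E \<Longrightarrow> A' e - A e \<in> V'"
    using bounded_ops_perturb_off_subspace[OF A L(1) x E(1) V'(1,2)] by blast
  have "openin T (- L)"
    using L(2) by (simp add: closedin_def Compl_eq_Diff_UNIV)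
  then have W: "openin T {w. A' x + w \<in> - L}"
    by (rule openin_translation_preimage)
  have W0: "0 \<in> {w. A' x + w \<in> - L}"
    using A'(2) by simp
  obtain S where S: "S \<in> \<Gamma>" "\<And>e. e \<in> E \<Longrightarrow> S e - A' e \<in> V'" "S x - A' x \<in> {w. A' x + w \<in> - L}"
    using sot_dense_approx_at_point[OF dense A'(1) E V'(1,2) W W0] by blast
  have "S x \<notin> L"
    using S(3) by simp
  moreover have "S \<in> bounded_ops smul T"
    using S(1) dense unfolding sot_dense_def by blast
  moreover have "S e - A e \<in> U" if "e \<in> E" for e
    using V'(3)[OF S(2) A'(3), OF that that] V(3) by (simp add: subset_iff)
  ultimately show "sot_nbhd smul T A E U \<inter> {A \<in> \<Gamma>. A x \<notin> L} \<noteq> {}"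
    unfolding sot_nbhd_def using S(1) by blast
qed

lemma not_strictly_transitive_avoiding_subspace:
  assumes "subspace L" "x \<noteq> 0" "y \<in> L" "y \<noteq> 0"
  shows "\<not> strictly_transitive smul {A \<in> \<Gamma>. A x \<notin> L}"
proof
  assume "strictly_transitive smul {A \<in> \<Gamma>. A x \<notin> L}"
  then obtain \<alpha> A where A: "A x \<notin> L" "smul \<alpha> (A x) = y"
    using assms(2,4) unfolding strictly_transitive_def by blast
  then have "\<alpha> \<noteq> 0"
    using assms(4) by auto
  then have "A x = smul (inverse \<alpha>) (smul \<alpha> (A x))"
    by simp
  also have "\<dots> \<in> L"
    using subspace_scale[OF assms(1,3)] A(2) by simp
  finally show False
    using A(1) by blast
qed

end

theorem corollary3p13:
  fixes smul :: "complex \<Rightarrow> 'v::ab_group_add \<Rightarrow> 'v" and T :: "'v topology"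
    and \<Gamma> :: "('v \<Rightarrow> 'v) set"
  assumes "complex_tvs smul T"
    and "Hausdorff_space T"
    and "dim_gt_one smul"
    and "sot_dense smul T \<Gamma>"
  shows "\<exists>\<Gamma>1. \<Gamma>1 \<subseteq> \<Gamma> \<and> sot_dense smul T \<Gamma>1 \<and> \<not> strictly_transitive smul \<Gamma>1"
proof -
  interpret complex_tvs_space smul T
    using assms(1) by unfold_locales
  obtain x y where xy: "x \<noteq> y" "independent {x, y}"
    using assms(3) unfolding dim_gt_one_def by blast
  then have x0: "x \<noteq> 0" and y0: "y \<noteq> 0"
    using dependent_zero by (metis insertCI)+
  have "{x, y} - {x} = {y}"
    using xy(1) by auto
  then have x: "x \<notin> span {y}"
    using xy(2) unfolding dependent_def by (metis insertI1)
  have L: "subspace (span {y})" "closedin T (span {y})"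
    by (simp_all add: subspace_span closedin_span_singleton[OF assms(2)])
  let ?\<Gamma>1 = "{A \<in> \<Gamma>. A x \<notin> span {y}}"
  have "sot_dense smul T ?\<Gamma>1"
    by (rule sot_dense_avoiding_closed_subspace[OF assms(4) L x])
  moreover have "\<not> strictly_transitive smul ?\<Gamma>1"
    by (rule not_strictly_transitive_avoiding_subspace[OF L(1) x0 span_base y0]) simp
  moreover have "?\<Gamma>1 \<subseteq> \<Gamma>"
    by (rule Collect_restrict)
  ultimately show ?thesis
    by (intro exI[of _ ?\<Gamma>1] conjI)
qed

end
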